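(* Let $E$ be the group with presentation $\langle t,u,v\mid t^2=1,\ u^2=v^2,\ tut^{-1}=u^{-1},\ tv=vt,\ uv=vu\rangle$, and let $\{T,U,V\}$ be the basis of $H^1(E;\mathbb{F}_2)$ dual to the images of $t,u,v$ in $H_1(E;\mathbb{F}_2)$. Then $TU+U^2+V^2=0$ in $H^2(E;\mathbb{F}_2)$.
   Context: Products are cup products. *)

theory Defs
  imports "HOL-Algebra.Group" "HOL-Library.Numeral_Type"
begin

datatype gen = Gt | Gu | Gv

type_synonym letter = "gen \<times> bool"  \<comment> \<open>(x, False) is x, (x, True) is x inverse\<close>
type_synonym word = "letter list"

definition relators :: "word set" where
  "relators =
     {[(Gt,False),(Gt,False)],                          \<comment> \<open>t^2\<close>
      [(Gu,False),(Gu,False),(Gv,True),(Gv,True)],      \<comment> \<open>u^2 v^-2\<close>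
      [(Gt,False),(Gu,False),(Gt,True),(Gu,False)],     \<comment> \<open>t u t^-1 u\<close>
      [(Gt,False),(Gv,False),(Gt,True),(Gv,True)],      \<comment> \<open>t v t^-1 v^-1\<close>
      [(Gu,False),(Gv,False),(Gu,True),(Gv,True)]}      \<comment> \<open>u v u^-1 v^-1\<close>"

inductive eqv :: "word \<Rightarrow> word \<Rightarrow> bool" where
  eqv_refl: "eqv w w"
| eqv_sym: "eqv w w' \<Longrightarrow> eqv w' w"
| eqv_trans: "eqv w1 w2 \<Longrightarrow> eqv w2 w3 \<Longrightarrow> eqv w1 w3"
| eqv_cancel: "eqv (a @ [(x, b), (x, \<not> b)] @ c) (a @ c)"
| eqv_rel: "r \<in> relators \<Longrightarrow> eqv (a @ r @ c) (a @ c)"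

definition E_rel :: "(word \<times> word) set" where
  "E_rel = {(x, y). eqv x y}"

definition cls :: "word \<Rightarrow> word set" where
  "cls w = E_rel `` {w}"

definition E :: "word set monoid" where
  "E = \<lparr> carrier = UNIV // E_rel,
         mult = (\<lambda>X Y. cls ((SOME x. x \<in> X) @ (SOME y. y \<in> Y))),
         one = cls [] \<rparr>"

text \<open>Elements of H^1(E;F_2) = Hom(E, F_2); F_2 is the type 2.\<close>
definition is_hom_F2 :: "(word set \<Rightarrow> 2) \<Rightarrow> bool" where
  "is_hom_F2 f \<longleftrightarrow> (\<forall>g\<in>carrier E. \<forall>h\<in>carrier E. f (g \<otimes>\<^bsub>E\<^esub> h) = f g + f h)"

definition cup1 :: "(word set \<Rightarrow> 2) \<Rightarrow> (word set \<Rightarrow> 2) \<Rightarrow> word set \<Rightarrow> word set \<Rightarrow> 2" where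
  "cup1 a b g h = a g * b h"

definition cobound1 :: "(word set \<Rightarrow> 2) \<Rightarrow> word set \<Rightarrow> word set \<Rightarrow> 2" where
  "cobound1 f g h = f h - f (g \<otimes>\<^bsub>E\<^esub> h) + f g"

end

theory Submission
  imports Defs
begin

text \<open>The 2-cocycle (g, h) \<mapsto> T g U h + U g U h + V g V h depends only on the exponent sums
  mod 2 of g and h, so it is already defined on words, where it is a bilinear form c.
  Every bilinear form on words is the coboundary of a function q with
  q (x @ y) = q x + q y + c x y, fixed by its values on the letters. Choosing
  q t = q t\<inverse> = 0, q u = q v = 1 and q u\<inverse> = q v\<inverse> = 0 makes q vanish on the cancelling pairs
  and on the relators; as these have even exponent sums, q is invariant under the defining
  congruence of E and so descends to a 1-cochain on E whose coboundary is the cocycle.\<close>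

lemma add_self_2: "(x::2) + x = 0"
proof -
  have "(2::2) = 0" by simp
  then show ?thesis by (metis mult_2 mult_zero_left)
qed

lemma uminus_2: "- (x::2) = x"
  by (metis add_self_2 add.inverse_unique)

lemma eqv_append_left: "eqv x x' \<Longrightarrow> eqv (y @ x) (y @ x')"
proof (induction rule: eqv.induct)
  case (eqv_cancel a g b c)
  show ?case using eqv.eqv_cancel[of "y @ a" g b c] by simp
next
  case (eqv_rel r a c)
  show ?case using eqv.eqv_rel[OF eqv_rel, of "y @ a" c] by simp
qed (auto intro: eqv.intros)

lemma eqv_append_right: "eqv x x' \<Longrightarrow> eqv (x @ y) (x' @ y)"
proof (induction rule: eqv.induct)
  case (eqv_cancel a g b c)
  show ?case using eqv.eqv_cancel[of a g b "c @ y"] by simp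
next
  case (eqv_rel r a c)
  show ?case using eqv.eqv_rel[OF eqv_rel, of a "c @ y"] by simp
qed (auto intro: eqv.intros)

lemma cls_eq_Collect: "cls x = {z. eqv x z}"
  unfolding cls_def E_rel_def by auto

lemma cls_eqI: "eqv x y \<Longrightarrow> cls x = cls y"
  unfolding cls_eq_Collect by (blast intro: eqv_sym eqv_trans)

lemma eqv_some_cls: "eqv w (SOME v. v \<in> cls w)"
proof -
  have "w \<in> cls w" by (simp add: cls_eq_Collect eqv_refl)
  then have "(SOME v. v \<in> cls w) \<in> cls w" by (rule someI)
  then show ?thesis by (simp add: cls_eq_Collect)
qed

lemma cls_in_carrier_E: "cls w \<in> carrier E"
  unfolding E_def cls_def by (simp add: quotientI)

lemma carrier_E_cls: "X \<in> carrier E \<Longrightarrow> \<exists>w. X = cls w"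
  unfolding E_def cls_def by (simp add: quotient_def)

lemma mult_E_cls: "cls x \<otimes>\<^bsub>E\<^esub> cls y = cls (x @ y)"
proof -
  have "eqv (x @ y) ((SOME a. a \<in> cls x) @ (SOME b. b \<in> cls y))"
    by (rule eqv_trans[OF eqv_append_right eqv_append_left]) (rule eqv_some_cls)+
  then have "cls (x @ y) = cls ((SOME a. a \<in> cls x) @ (SOME b. b \<in> cls y))"
    by (rule cls_eqI)
  then show ?thesis by (simp add: E_def)
qed

fun exp_parity :: "gen \<Rightarrow> word \<Rightarrow> 2" where
  "exp_parity g [] = 0"
| "exp_parity g (l # w) = (if fst l = g then 1 else 0) + exp_parity g w"

lemma exp_parity_append: "exp_parity g (x @ y) = exp_parity g x + exp_parity g y"
  by (induction x) (auto simp: algebra_simps)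

lemma hom_F2_cls_append:
  "is_hom_F2 \<phi> \<Longrightarrow> \<phi> (cls (x @ y)) = \<phi> (cls x) + \<phi> (cls y)"
  unfolding is_hom_F2_def by (metis mult_E_cls cls_in_carrier_E)

lemma hom_F2_cls_Nil: "is_hom_F2 \<phi> \<Longrightarrow> \<phi> (cls []) = 0"
  using hom_F2_cls_append[of \<phi> "[]" "[]"] by simp

lemma hom_F2_cls_inverse:
  assumes "is_hom_F2 \<phi>"
  shows "\<phi> (cls [(g, True)]) = \<phi> (cls [(g, False)])"
proof -
  have "cls ([(g, False)] @ [(g, True)]) = cls []"
    using cls_eqI[OF eqv_cancel[of "[]" g False "[]"]] by simp
  then have "\<phi> (cls [(g, False)]) + \<phi> (cls [(g, True)]) = 0"
    by (metis assms hom_F2_cls_append hom_F2_cls_Nil)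
  then show ?thesis by (metis add.inverse_unique uminus_2)
qed

lemma hom_F2_cls:
  assumes "is_hom_F2 \<phi>"
  shows "\<phi> (cls w) = \<phi> (cls [(Gt,False)]) * exp_parity Gt w
    + \<phi> (cls [(Gu,False)]) * exp_parity Gu w + \<phi> (cls [(Gv,False)]) * exp_parity Gv w"
proof (induction w)
  case Nil
  show ?case using hom_F2_cls_Nil[OF assms] by simp
next
  case (Cons l w)
  obtain g b where l: "l = (g, b)" by fastforce
  have "\<phi> (cls (l # w)) = \<phi> (cls [l]) + \<phi> (cls w)"
    using hom_F2_cls_append[OF assms, of "[l]" w] by simp
  then show ?case
    using Cons.IH hom_F2_cls_inverse[OF assms, of g]
    by (cases g; cases b) (simp_all add: l algebra_simps)
qed

definition cup_form :: "word \<Rightarrow> word \<Rightarrow> 2" where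
  "cup_form x y = exp_parity Gt x * exp_parity Gu y + exp_parity Gu x * exp_parity Gu y
    + exp_parity Gv x * exp_parity Gv y"

lemma cup_form_append_left: "cup_form (x @ y) z = cup_form x z + cup_form y z"
  unfolding cup_form_def exp_parity_append by (simp add: algebra_simps)

lemma cup_form_append_right: "cup_form z (x @ y) = cup_form z x + cup_form z y"
  unfolding cup_form_def exp_parity_append by (simp add: algebra_simps)

fun quad_letter :: "letter \<Rightarrow> 2" where
  "quad_letter (Gt, b) = 0"
| "quad_letter (Gu, b) = (if b then 0 else 1)"
| "quad_letter (Gv, b) = (if b then 0 else 1)"

fun quad :: "word \<Rightarrow> 2" where
  "quad [] = 0"
| "quad (l # w) = quad_letter l + quad w + cup_form [l] w"

lemma quad_append: "quad (x @ y) = quad x + quad y + cup_form x y"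
proof (induction x)
  case Nil
  show ?case by (simp add: cup_form_def)
next
  case (Cons l x)
  then show ?case
    using cup_form_append_right[of "[l]" x y] cup_form_append_left[of "[l]" x y]
    by (simp add: algebra_simps)
qed

lemma quad_insert_null:
  assumes "quad r = 0" and "\<And>g. exp_parity g r = 0"
  shows "quad (a @ r @ b) = quad (a @ b)"
  using assms by (simp add: quad_append cup_form_def exp_parity_append)

lemma quad_eqv: "eqv x y \<Longrightarrow> quad x = quad y"
proof (induction rule: eqv.induct)
  case (eqv_cancel a g b c)
  show ?case
    by (rule quad_insert_null) (cases g; cases b; simp add: cup_form_def add_self_2)+
next
  case (eqv_rel r a c)
  show ?case
    by (rule quad_insert_null) (use eqv_rel in \<open>auto simp: relators_def cup_form_def add_self_2\<close>)
qed simp_all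

definition quad_E :: "word set \<Rightarrow> 2" where
  "quad_E X = quad (SOME w. w \<in> X)"

lemma quad_E_cls: "quad_E (cls w) = quad w"
  unfolding quad_E_def using quad_eqv[OF eqv_some_cls] by simp

lemma cobound1_quad_E: "cobound1 quad_E (cls x) (cls y) = cup_form x y"
proof -
  have "cobound1 quad_E (cls x) (cls y) = quad y - (quad x + quad y + cup_form x y) + quad x"
    by (simp add: cobound1_def mult_E_cls quad_E_cls quad_append)
  also have "\<dots> = - cup_form x y"
    by (simp add: algebra_simps)
  finally show ?thesis by (simp add: uminus_2)
qed

theorem lemma6:
  fixes T U V :: "word set \<Rightarrow> 2"
  assumes "is_hom_F2 T" and "is_hom_F2 U" and "is_hom_F2 V"
    and "T (cls [(Gt,False)]) = 1" and "T (cls [(Gu,False)]) = 0" and "T (cls [(Gv,False)]) = 0"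
    and "U (cls [(Gt,False)]) = 0" and "U (cls [(Gu,False)]) = 1" and "U (cls [(Gv,False)]) = 0"
    and "V (cls [(Gt,False)]) = 0" and "V (cls [(Gu,False)]) = 0" and "V (cls [(Gv,False)]) = 1"
  shows "\<exists>f :: word set \<Rightarrow> 2. \<forall>g\<in>carrier E. \<forall>h\<in>carrier E.
           cup1 T U g h + cup1 U U g h + cup1 V V g h = cobound1 f g h"
proof (intro exI ballI)
  fix g h assume "g \<in> carrier E" and "h \<in> carrier E"
  then obtain x y where g: "g = cls x" and h: "h = cls y" by (metis carrier_E_cls)
  have "T (cls w) = exp_parity Gt w" "U (cls w) = exp_parity Gu w" "V (cls w) = exp_parity Gv w"
    for w using assms(4-12) hom_F2_cls[OF assms(1), of w] hom_F2_cls[OF assms(2), of w]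
      hom_F2_cls[OF assms(3), of w] by simp_all
  then show "cup1 T U g h + cup1 U U g h + cup1 V V g h = cobound1 quad_E g h"
    by (simp add: g h cup1_def cobound1_quad_E cup_form_def)
qed

end
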